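(* Let $G$ be a finite Weetman graph, $v_0\in V(G)$, and let $C$ be a cluster of $G$ with respect to $v_0$ contained in $S^k$ with $k\ge 1$. Then there is a unique cluster $a(C)\subseteq S^{k-1}$ adjacent to $C$ in the cluster graph $\mathcal{C}(G)$, and every path in $G$ from $v_0$ to a vertex of $C$ contains a vertex of $a(C)$.
   Context: All graphs are simple and connected; $d$ is graph distance and $\mathrm{pred}_{v_0}(v)=\{u : uv\in E(G),\ d(v_0,u)=d(v_0,v)-1\}$. $G$ is Weetman if for every vertex $v_0$: (Triangle Condition) for every two adjacent vertices $v,v'$ with $d(v_0,v)=d(v_0,v')=k$, there is $u$ with $d(v_0,u)=k-1$ and $uv,uv'\in E(G)$; (Interval Condition) for every vertex $v$, the subgraph induced by $\mathrm{pred}_{v_0}(v)$ is connected. For $i\ge0$ let $S^i=\{v: d(v_0,v)=i\}$. The clusters with respect to $v_0$ are the vertex sets of the connected components of the induced subgraphs $G[S^i]$, $i\ge 0$. The cluster graph $\mathcal{C}(G)$ has the clusters as vertices, two distinct clusters $C,C'$ being adjacent iff some $v\in C$, $v'\in C'$ satisfy $vv'\in E(G)$. *)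

theory Defs
  imports Main
begin

definition simple_graph :: "'a set \<Rightarrow> ('a \<Rightarrow> 'a \<Rightarrow> bool) \<Rightarrow> bool" where
  "simple_graph V E \<longleftrightarrow> (\<forall>x y. E x y \<longrightarrow> x \<in> V \<and> y \<in> V \<and> E y x \<and> x \<noteq> y)"

definition walk :: "'a set \<Rightarrow> ('a \<Rightarrow> 'a \<Rightarrow> bool) \<Rightarrow> 'a list \<Rightarrow> bool" where
  "walk V E xs \<longleftrightarrow> xs \<noteq> [] \<and> set xs \<subseteq> V \<and> (\<forall>i. Suc i < length xs \<longrightarrow> E (xs ! i) (xs ! Suc i))"

definition gpath :: "'a set \<Rightarrow> ('a \<Rightarrow> 'a \<Rightarrow> bool) \<Rightarrow> 'a list \<Rightarrow> bool" where
  "gpath V E xs \<longleftrightarrow> walk V E xs \<and> distinct xs"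

text \<open>The subgraph induced by S is connected (the empty set counts as connected).\<close>
definition connected_set :: "('a \<Rightarrow> 'a \<Rightarrow> bool) \<Rightarrow> 'a set \<Rightarrow> bool" where
  "connected_set E S \<longleftrightarrow> (\<forall>u\<in>S. \<forall>v\<in>S. \<exists>xs. walk S E xs \<and> hd xs = u \<and> last xs = v)"

definition connected_graph :: "'a set \<Rightarrow> ('a \<Rightarrow> 'a \<Rightarrow> bool) \<Rightarrow> bool" where
  "connected_graph V E \<longleftrightarrow> V \<noteq> {} \<and> connected_set E V"

definition gdist :: "'a set \<Rightarrow> ('a \<Rightarrow> 'a \<Rightarrow> bool) \<Rightarrow> 'a \<Rightarrow> 'a \<Rightarrow> nat" where
  "gdist V E u v = (LEAST n. \<exists>xs. walk V E xs \<and> hd xs = u \<and> last xs = v \<and> length xs = Suc n)"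

definition sphere :: "'a set \<Rightarrow> ('a \<Rightarrow> 'a \<Rightarrow> bool) \<Rightarrow> 'a \<Rightarrow> nat \<Rightarrow> 'a set" where
  "sphere V E v0 i = {v \<in> V. gdist V E v0 v = i}"

definition pred :: "'a set \<Rightarrow> ('a \<Rightarrow> 'a \<Rightarrow> bool) \<Rightarrow> 'a \<Rightarrow> 'a \<Rightarrow> 'a set" where
  "pred V E v0 v = {u \<in> V. E u v \<and> gdist V E v0 u + 1 = gdist V E v0 v}"

definition triangle_condition :: "'a set \<Rightarrow> ('a \<Rightarrow> 'a \<Rightarrow> bool) \<Rightarrow> 'a \<Rightarrow> bool" where
  "triangle_condition V E v0 \<longleftrightarrow>
     (\<forall>v\<in>V. \<forall>v'\<in>V. E v v' \<and> gdist V E v0 v = gdist V E v0 v' \<longrightarrow>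
        (\<exists>u\<in>V. gdist V E v0 u + 1 = gdist V E v0 v \<and> E u v \<and> E u v'))"

definition interval_condition :: "'a set \<Rightarrow> ('a \<Rightarrow> 'a \<Rightarrow> bool) \<Rightarrow> 'a \<Rightarrow> bool" where
  "interval_condition V E v0 \<longleftrightarrow> (\<forall>v\<in>V. connected_set E (pred V E v0 v))"

definition weetman :: "'a set \<Rightarrow> ('a \<Rightarrow> 'a \<Rightarrow> bool) \<Rightarrow> bool" where
  "weetman V E \<longleftrightarrow> (\<forall>v0\<in>V. triangle_condition V E v0 \<and> interval_condition V E v0)"

definition component_of :: "('a \<Rightarrow> 'a \<Rightarrow> bool) \<Rightarrow> 'a set \<Rightarrow> 'a set \<Rightarrow> bool" where
  "component_of E S C \<longleftrightarrow> C \<noteq> {} \<and> C \<subseteq> S \<and> connected_set E C \<and>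
     (\<forall>x\<in>C. \<forall>y\<in>S. E x y \<longrightarrow> y \<in> C)"

definition cluster :: "'a set \<Rightarrow> ('a \<Rightarrow> 'a \<Rightarrow> bool) \<Rightarrow> 'a \<Rightarrow> 'a set \<Rightarrow> bool" where
  "cluster V E v0 C \<longleftrightarrow> (\<exists>i. component_of E (sphere V E v0 i) C)"

definition cluster_adj :: "('a \<Rightarrow> 'a \<Rightarrow> bool) \<Rightarrow> 'a set \<Rightarrow> 'a set \<Rightarrow> bool" where
  "cluster_adj E C C' \<longleftrightarrow> C \<noteq> C' \<and> (\<exists>v\<in>C. \<exists>v'\<in>C'. E v v')"

end

theory Submission
  imports Defs
begin

text \<open>
Call u a parent of v if uv is an edge and d(v0,u) + 1 = d(v0,v), and let ancestors be iterated
parents. By induction on d(v0,w), the Interval Condition (the parents of w induce a connected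
subgraph) and the Triangle Condition (adjacent vertices of equal depth have a common parent) show
that all ancestors of w of a fixed depth m lie in one cluster of S^m; the same then holds jointly
for two adjacent vertices of depth greater than m, and hence, propagating along walks, for any set
of vertices of depth at least k > m that is connected within that region. For a cluster C in S^k,
every cluster of S^(k-1) adjacent to C contains a parent of a vertex of C, so it is the cluster of
one fixed such parent; and a path from v0 to C enters the region of depth at least k for the last
time through an edge from a parent, whose tail lies in that cluster.
\<close>

inductive reachable :: "('a \<Rightarrow> 'a \<Rightarrow> bool) \<Rightarrow> 'a set \<Rightarrow> 'a \<Rightarrow> 'a \<Rightarrow> bool" for E S where
  reachable_refl: "x \<in> S \<Longrightarrow> reachable E S x x"
| reachable_step: "reachable E S x y \<Longrightarrow> E y z \<Longrightarrow> z \<in> S \<Longrightarrow> reachable E S x z"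

lemma reachable_mem: "reachable E S x y \<Longrightarrow> x \<in> S \<and> y \<in> S"
  by (induction rule: reachable.induct) auto

lemma reachable_trans: "reachable E S x y \<Longrightarrow> reachable E S y z \<Longrightarrow> reachable E S x z"
  by (rotate_tac, induction rule: reachable.induct) (auto intro: reachable_step)

lemma reachable_mono: "reachable E S x y \<Longrightarrow> S \<subseteq> T \<Longrightarrow> reachable E T x y"
  by (induction rule: reachable.induct) (auto intro: reachable.intros)

lemma reachable_edge: "E x y \<Longrightarrow> x \<in> S \<Longrightarrow> y \<in> S \<Longrightarrow> reachable E S x y"
  by (blast intro: reachable.intros)

lemma reachable_sym:
  assumes "symp E" "reachable E S x y"
  shows "reachable E S y x"
  using assms(2)
proof (induction rule: reachable.induct)
  case (reachable_step x y z)
  have "E z y" using assms(1) reachable_step.hyps(2) by (rule sympD)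
  moreover have "z \<in> S" "y \<in> S"
    using reachable_step.hyps(3) reachable_mem[OF reachable_step.hyps(1)] by auto
  ultimately have "reachable E S z y" by (rule reachable_edge)
  then show ?case using reachable_step.IH by (rule reachable_trans)
qed (rule reachable_refl)

lemma reachable_lift:
  assumes "reachable E S x y"
    and "\<And>a. a \<in> S \<Longrightarrow> Q a a"
    and "\<And>a b. a \<in> S \<Longrightarrow> b \<in> S \<Longrightarrow> E a b \<Longrightarrow> Q a b"
    and "\<And>a b c. b \<in> S \<Longrightarrow> Q a b \<Longrightarrow> Q b c \<Longrightarrow> Q a c"
  shows "Q x y"
  using assms(1)
proof (induction rule: reachable.induct)
  case (reachable_step x y z)
  have "y \<in> S" using reachable_mem[OF reachable_step.hyps(1)] ..
  then have "Q y z" using reachable_step.hyps(3,2) by (rule assms(3))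
  with \<open>y \<in> S\<close> reachable_step.IH show ?case by (rule assms(4))
qed (rule assms(2))

lemma walk_snoc_iff:
  assumes "xs \<noteq> []"
  shows "walk S E (xs @ [z]) \<longleftrightarrow> walk S E xs \<and> E (last xs) z \<and> z \<in> S"
proof -
  have last: "xs ! (length xs - 1) = last xs" "Suc (length xs - 1) = length xs"
    using assms by (simp_all add: last_conv_nth)
  have "(\<forall>i. Suc i < length (xs @ [z]) \<longrightarrow> E ((xs @ [z]) ! i) ((xs @ [z]) ! Suc i)) \<longleftrightarrow>
      (\<forall>i. Suc i < length xs \<longrightarrow> E (xs ! i) (xs ! Suc i)) \<and> E (last xs) z"
    (is "?all \<longleftrightarrow> _")
  proof
    assume ?all
    have "E (xs ! i) (xs ! Suc i)" if "Suc i < length xs" for i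
      using spec[OF \<open>?all\<close>, of i] that by (simp add: nth_append)
    moreover have "E (last xs) z"
      using spec[OF \<open>?all\<close>, of "length xs - 1"] last by (simp add: nth_append)
    ultimately show "(\<forall>i. Suc i < length xs \<longrightarrow> E (xs ! i) (xs ! Suc i)) \<and> E (last xs) z"
      by blast
  next
    assume *: "(\<forall>i. Suc i < length xs \<longrightarrow> E (xs ! i) (xs ! Suc i)) \<and> E (last xs) z"
    show ?all
    proof (intro allI impI)
      fix i assume "Suc i < length (xs @ [z])"
      then consider "Suc i < length xs" | "i = length xs - 1" by fastforce
      then show "E ((xs @ [z]) ! i) ((xs @ [z]) ! Suc i)"
        by cases (use * last in \<open>auto simp: nth_append\<close>)
    qed
  qed
  then show ?thesis using assms unfolding walk_def by auto
qed

lemma walk_singleton: "walk S E [x] \<longleftrightarrow> x \<in> S"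
  by (simp add: walk_def)

lemma walk_imp_reachable: "walk S E xs \<Longrightarrow> reachable E S (hd xs) (last xs)"
proof (induction xs rule: rev_induct)
  case (snoc z xs)
  then show ?case
    by (cases "xs = []") (auto simp: walk_snoc_iff walk_singleton intro: reachable.intros)
qed (simp add: walk_def)

lemma reachable_imp_walk: "reachable E S x y \<Longrightarrow> \<exists>xs. walk S E xs \<and> hd xs = x \<and> last xs = y"
proof (induction rule: reachable.induct)
  case (reachable_refl x)
  then show ?case by (intro exI[of _ "[x]"]) (simp add: walk_singleton)
next
  case (reachable_step x y z)
  then obtain xs where "walk S E xs" "hd xs = x" "last xs = y" by blast
  with reachable_step show ?case
    by (intro exI[of _ "xs @ [z]"]) (auto simp: walk_snoc_iff walk_def[of S E xs])
qed

lemma connected_set_iff_reachable: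
  "connected_set E S \<longleftrightarrow> (\<forall>u\<in>S. \<forall>v\<in>S. reachable E S u v)"
  unfolding connected_set_def by (metis walk_imp_reachable reachable_imp_walk)

lemma component_of_eq_reachable:
  assumes "component_of E S X" "x \<in> X"
  shows "X = {y. reachable E S x y}"
proof
  have "X \<subseteq> S" "connected_set E X" using assms(1) unfolding component_of_def by auto
  then show "X \<subseteq> {y. reachable E S x y}"
    using assms(2) by (auto simp: connected_set_iff_reachable intro: reachable_mono)
  have "reachable E S u y \<Longrightarrow> u \<in> X \<Longrightarrow> y \<in> X" for u y
    by (induction rule: reachable.induct) (use assms(1) in \<open>auto simp: component_of_def\<close>)
  then show "{y. reachable E S x y} \<subseteq> X" using assms(2) by blast
qed

lemma component_of_reachable:
  assumes "symp E" "x \<in> S"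
  shows "component_of E S {y. reachable E S x y}"
proof -
  let ?X = "{y. reachable E S x y}"
  have lift: "reachable E ?X u v" if "reachable E S u v" "reachable E S x u" for u v
    using that by (induction rule: reachable.induct)
      (auto intro: reachable.intros dest: reachable_trans)
  have "reachable E ?X u v" if "u \<in> ?X" "v \<in> ?X" for u v
  proof (rule lift)
    have "reachable E S u x" using that(1) reachable_sym[OF assms(1)] by simp
    then show "reachable E S u v" using that(2) by (simp add: reachable_trans)
  qed (use that in simp)
  then have "connected_set E ?X" unfolding connected_set_iff_reachable by blast
  then show ?thesis
    unfolding component_of_def using assms(2)
    by (auto intro: reachable.intros dest: reachable_mem)
qed

lemma cluster_component_of_sphere:
  assumes "cluster V E v0 X" "X \<subseteq> sphere V E v0 j"
  shows "component_of E (sphere V E v0 j) X"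
proof -
  obtain i where i: "component_of E (sphere V E v0 i) X" using assms(1) unfolding cluster_def by blast
  then obtain x where "x \<in> X" "X \<subseteq> sphere V E v0 i" unfolding component_of_def by blast
  with assms(2) have "i = j" unfolding sphere_def by blast
  with i show ?thesis by simp
qed

locale rooted_graph =
  fixes V :: "'a set" and E :: "'a \<Rightarrow> 'a \<Rightarrow> bool" and v0 :: 'a
  assumes simple: "simple_graph V E" and connected: "connected_graph V E" and root: "v0 \<in> V"
begin

abbreviation depth :: "'a \<Rightarrow> nat" where "depth \<equiv> gdist V E v0"
abbreviation level :: "nat \<Rightarrow> 'a set" where "level \<equiv> sphere V E v0"
abbreviation exterior :: "nat \<Rightarrow> 'a set" where "exterior k \<equiv> {x \<in> V. k \<le> depth x}"
abbreviation parent :: "'a \<Rightarrow> 'a \<Rightarrow> bool" where "parent u v \<equiv> u \<in> pred V E v0 v"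
abbreviation ancestor :: "'a \<Rightarrow> 'a \<Rightarrow> bool" where "ancestor \<equiv> parent\<^sup>*\<^sup>*"

lemma symp_edge: "symp E"
  using simple unfolding simple_graph_def by (auto intro: sympI)

lemma edge_vertices: "E x y \<Longrightarrow> x \<in> V \<and> y \<in> V"
  using simple unfolding simple_graph_def by blast

lemma geodesic_exists:
  assumes "u \<in> V"
  shows "\<exists>xs. walk V E xs \<and> hd xs = v0 \<and> last xs = u \<and> length xs = Suc (depth u)"
proof -
  obtain xs where xs: "walk V E xs" "hd xs = v0" "last xs = u"
    using connected root assms unfolding connected_graph_def connected_set_def by blast
  then have "length xs = Suc (length xs - 1)" unfolding walk_def by (cases xs) auto
  with xs have "\<exists>n xs. walk V E xs \<and> hd xs = v0 \<and> last xs = u \<and> length xs = Suc n" by blast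
  then show ?thesis unfolding gdist_def by (rule LeastI_ex)
qed

lemma depth_walk_less:
  assumes "walk V E xs" "hd xs = v0"
  shows "depth (last xs) < length xs"
proof -
  have "length xs = Suc (length xs - 1)" using assms unfolding walk_def by (cases xs) auto
  then have "depth (last xs) \<le> length xs - 1"
    unfolding gdist_def using assms by (intro Least_le) metis
  then show ?thesis using \<open>length xs = Suc (length xs - 1)\<close> by linarith
qed

lemma depth_root: "depth v0 = 0"
  using depth_walk_less[of "[v0]"] root by (simp add: walk_def)

lemma depth_edge:
  assumes "E u v"
  shows "depth v \<le> depth u + 1"
proof -
  obtain xs where xs: "walk V E xs" "hd xs = v0" "last xs = u" "length xs = Suc (depth u)"
    using geodesic_exists edge_vertices assms by blast
  moreover have "xs \<noteq> []" using xs(4) by auto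
  ultimately have "walk V E (xs @ [v])" "hd (xs @ [v]) = v0"
    using assms edge_vertices by (auto simp: walk_snoc_iff)
  from depth_walk_less[OF this] show ?thesis using xs(4) by simp
qed

lemma parent_iff: "parent u v \<longleftrightarrow> E u v \<and> depth u + 1 = depth v"
  unfolding pred_def using edge_vertices by blast

lemma parent_exists:
  assumes "v \<in> V" "0 < depth v"
  shows "\<exists>u. parent u v"
proof -
  obtain xs where xs: "walk V E xs" "hd xs = v0" "last xs = v" "length xs = Suc (depth v)"
    using geodesic_exists assms(1) by blast
  define ys where "ys = butlast xs"
  have "xs \<noteq> []" using xs(4) by auto
  then have "xs = ys @ [v]" "length ys = depth v" unfolding ys_def using xs(3,4) by auto
  then have "ys \<noteq> []" using assms(2) by auto
  with xs \<open>xs = ys @ [v]\<close> have "walk V E ys" "E (last ys) v" "hd ys = v0"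
    by (auto simp: walk_snoc_iff)
  then have "E (last ys) v" "depth (last ys) + 1 = depth v"
    using depth_walk_less[of ys] depth_edge[of "last ys" v] \<open>length ys = depth v\<close> by auto
  then show ?thesis unfolding parent_iff by blast
qed

lemma ancestor_depth:
  "ancestor u w \<Longrightarrow> w \<in> V \<Longrightarrow> u \<in> V \<and> depth u \<le> depth w \<and> (depth u = depth w \<longrightarrow> u = w)"
  by (induction rule: converse_rtranclp_induct) (auto simp: pred_def)

lemma ancestor_at_depth:
  "w \<in> V \<Longrightarrow> m \<le> depth w \<Longrightarrow> \<exists>u. ancestor u w \<and> depth u = m"
proof (induction "depth w - m" arbitrary: w)
  case 0
  then show ?case by (intro exI[of _ w]) auto
next
  case (Suc n)
  then obtain p where "parent p w" using parent_exists by fastforce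
  moreover from this have "p \<in> V" "depth p + 1 = depth w" unfolding pred_def by auto
  moreover have "n = depth p - m" "m \<le> depth p" using Suc.hyps(2) \<open>depth p + 1 = depth w\<close> by arith+
  ultimately obtain u where "ancestor u p" "depth u = m" using Suc.hyps(1) by blast
  moreover from this(1) have "ancestor u w" using \<open>parent p w\<close> by (rule rtranclp.rtrancl_into_rtrancl)
  ultimately show ?case by blast
qed

lemma walk_enters_exterior:
  "walk V E xs \<Longrightarrow> depth (hd xs) < k \<Longrightarrow> k \<le> depth (last xs) \<Longrightarrow>
    \<exists>a b. a \<in> set xs \<and> parent a b \<and> depth b = k \<and> reachable E (exterior k) b (last xs)"
proof (induction xs rule: rev_induct)
  case (snoc y ys)
  then have "ys \<noteq> []" by auto
  with snoc.prems have ys: "walk V E ys" "E (last ys) y" "y \<in> V" "hd ys = hd (ys @ [y])"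
    by (auto simp: walk_snoc_iff)
  show ?case
  proof (cases "depth (last ys) < k")
    case True
    then have "parent (last ys) y" "depth y = k"
      using depth_edge[OF ys(2)] snoc.prems(3) ys(2) by (auto simp: parent_iff)
    moreover have "reachable E (exterior k) y y" using ys(3) \<open>depth y = k\<close> by (auto intro: reachable_refl)
    ultimately show ?thesis using \<open>ys \<noteq> []\<close> by (intro exI[of _ "last ys"] exI[of _ y]) auto
  next
    case False
    with snoc.IH ys snoc.prems(2) obtain a b where
      "a \<in> set ys" "parent a b" "depth b = k" and b: "reachable E (exterior k) b (last ys)"
      by auto
    moreover have "reachable E (exterior k) b y"
      using b ys(2,3) snoc.prems(3) by (auto intro: reachable_step)
    ultimately show ?thesis by auto
  qed
qed (simp add: walk_def)

end

locale weetman_rooted = rooted_graph +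
  assumes triangle: "triangle_condition V E v0" and interval: "interval_condition V E v0"
begin

definition linked_at :: "nat \<Rightarrow> 'a \<Rightarrow> 'a \<Rightarrow> bool" where
  "linked_at m a b \<longleftrightarrow>
    (\<forall>z z'. ancestor z a \<longrightarrow> ancestor z' b \<longrightarrow> depth z = m \<longrightarrow> depth z' = m \<longrightarrow> reachable E (level m) z z')"

lemma linked_at_ancestors:
  "linked_at m a b \<Longrightarrow> ancestor a' a \<Longrightarrow> ancestor b' b \<Longrightarrow> linked_at m a' b'"
  unfolding linked_at_def by (blast intro: rtranclp_trans)

lemma linked_at_trans:
  assumes "b \<in> V" "m \<le> depth b" "linked_at m a b" "linked_at m b c"
  shows "linked_at m a c"
  unfolding linked_at_def
proof (intro allI impI)
  fix z z' assume "ancestor z a" "ancestor z' c" "depth z = m" "depth z' = m"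
  moreover obtain y where "ancestor y b" "depth y = m" using ancestor_at_depth assms(1,2) by blast
  ultimately have "reachable E (level m) z y" "reachable E (level m) y z'"
    using assms(3,4) unfolding linked_at_def by blast+
  then show "reachable E (level m) z z'" by (rule reachable_trans)
qed

lemma linked_at_edge_same_depth:
  assumes "E w w'" "depth w = depth w'" "m \<le> depth w" "linked_at m w w" "linked_at m w' w'"
  shows "linked_at m w w'"
proof (cases "depth w = m")
  case True
  have "z = w" if "ancestor z w" "depth z = m" for z
    using ancestor_depth[OF that(1)] edge_vertices assms(1) that(2) True by auto
  moreover have "z' = w'" if "ancestor z' w'" "depth z' = m" for z'
    using ancestor_depth[OF that(1)] edge_vertices assms(1,2) that(2) True by auto
  moreover have "reachable E (level m) w w'"
    using assms(1,2) edge_vertices True by (auto simp: sphere_def intro: reachable_edge)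
  ultimately show ?thesis unfolding linked_at_def by blast
next
  case False
  obtain r where "r \<in> V" "depth r + 1 = depth w" "E r w" "E r w'"
    using triangle assms(1,2) edge_vertices unfolding triangle_condition_def by metis
  then have "parent r w" "parent r w'" "m \<le> depth r" using assms(2,3) False by (auto simp: parent_iff)
  then have "linked_at m w r" "linked_at m r w'"
    using linked_at_ancestors assms(4,5) by blast+
  then show ?thesis using linked_at_trans \<open>r \<in> V\<close> \<open>m \<le> depth r\<close> by blast
qed

lemma linked_at_refl: "w \<in> V \<Longrightarrow> linked_at m w w"
proof (induction "depth w" arbitrary: w rule: less_induct)
  case less
  show ?case
  proof (cases "depth w \<le> m")
    case True
    have "z = w" if "ancestor z w" "depth z = m" for z
      using ancestor_depth[OF that(1) less.prems] that(2) True by auto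
    then show ?thesis unfolding linked_at_def
      using less.prems by (auto simp: sphere_def intro: reachable_refl)
  next
    case False
    have linked_parents: "linked_at m p p'" if "parent p w" "parent p' w" for p p'
    proof -
      have "reachable E (pred V E v0 w) p p'"
        using interval less.prems that
        unfolding interval_condition_def connected_set_iff_reachable by blast
      then show ?thesis
      proof (rule reachable_lift)
        fix a assume "a \<in> pred V E v0 w"
        then show "linked_at m a a" using less.hyps by (auto simp: pred_def)
      next
        fix a b assume "a \<in> pred V E v0 w" "b \<in> pred V E v0 w" "E a b"
        moreover from this(1,2) have "depth a = depth b" "m \<le> depth a" "linked_at m a a" "linked_at m b b"
          using less.hyps False by (auto simp: pred_def)
        ultimately show "linked_at m a b" by (blast intro: linked_at_edge_same_depth)
      next
        fix a b c assume "b \<in> pred V E v0 w" "linked_at m a b" "linked_at m b c"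
        moreover from this(1) have "b \<in> V" "m \<le> depth b" using False by (auto simp: pred_def)
        ultimately show "linked_at m a c" by (blast intro: linked_at_trans)
      qed
    qed
    show ?thesis unfolding linked_at_def
    proof (intro allI impI)
      fix z z' assume z: "ancestor z w" "ancestor z' w" "depth z = m" "depth z' = m"
      have "\<exists>p. ancestor y p \<and> parent p w" if "ancestor y w" "depth y = m" for y
        using that(1) by (rule rtranclp.cases) (use that(2) False in auto)
      then obtain p p' where "ancestor z p" "parent p w" "ancestor z' p'" "parent p' w"
        using z by blast
      then show "reachable E (level m) z z'"
        using linked_parents z(3,4) unfolding linked_at_def by blast
    qed
  qed
qed

lemma linked_at_edge:
  assumes "E w w'" "m < depth w" "m < depth w'"
  shows "linked_at m w w'"
proof -
  have refl: "linked_at m w w" "linked_at m w' w'"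
    using assms(1) edge_vertices by (auto intro: linked_at_refl)
  consider "depth w = depth w'" | "depth w + 1 = depth w'" | "depth w' + 1 = depth w"
    using depth_edge[OF assms(1)] depth_edge[OF sympD[OF symp_edge assms(1)]] by linarith
  then show ?thesis
  proof cases
    case 1
    from assms(1) this less_imp_le[OF assms(2)] refl show ?thesis by (rule linked_at_edge_same_depth)
  next
    case 2
    then have "ancestor w w'" using assms(1) by (auto simp: parent_iff)
    then show ?thesis using linked_at_ancestors[OF refl(2)] by blast
  next
    case 3
    then have "ancestor w' w" using assms(1) symp_edge by (auto simp: parent_iff dest: sympD)
    then show ?thesis using linked_at_ancestors[OF refl(1)] by blast
  qed
qed

lemma linked_at_exterior:
  assumes "reachable E (exterior k) c c'" "m < k"
  shows "linked_at m c c'"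
  using assms(1)
proof (rule reachable_lift)
  fix a b c assume "b \<in> exterior k" "linked_at m a b" "linked_at m b c"
  then show "linked_at m a c" using assms(2) by (auto intro: linked_at_trans[of b])
next
  fix a b assume "a \<in> exterior k" "b \<in> exterior k" "E a b"
  then show "linked_at m a b" using assms(2) by (auto intro: linked_at_edge)
qed (simp add: linked_at_refl)

lemma parents_reachable_below:
  assumes "reachable E (exterior k) c c'" "0 < k" "depth c = k" "depth c' = k" "parent p c" "parent a c'"
  shows "reachable E (level (k - 1)) p a"
proof -
  have "k - 1 < k" using assms(2) by simp
  with assms(1) have "linked_at (k - 1) c c'" by (rule linked_at_exterior)
  moreover have "depth p = k - 1" "depth a = k - 1" using assms(3-6) by (auto simp: parent_iff)
  ultimately show ?thesis using assms(5,6) unfolding linked_at_def by blast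
qed

lemma component_reachable_exterior:
  assumes "component_of E (level k) C" "c \<in> C" "c' \<in> C"
  shows "reachable E (exterior k) c c'"
proof -
  have "reachable E C c c'"
    using assms unfolding component_of_def connected_set_iff_reachable by blast
  moreover have "C \<subseteq> exterior k" using assms(1) unfolding component_of_def sphere_def by auto
  ultimately show ?thesis by (rule reachable_mono)
qed

context
  fixes C k c p
  assumes component: "component_of E (level k) C" and "0 < k" and "c \<in> C" and "parent p c"
begin

abbreviation parent_cluster :: "'a set" where
  "parent_cluster \<equiv> {y. reachable E (level (k - 1)) p y}"

lemma depth_component: "x \<in> C \<Longrightarrow> depth x = k"
  using component unfolding component_of_def sphere_def by auto

lemma parent_level: "p \<in> level (k - 1)"
  using \<open>parent p c\<close> depth_component[OF \<open>c \<in> C\<close>] by (auto simp: sphere_def pred_def)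

lemma parent_cluster_component: "component_of E (level (k - 1)) parent_cluster"
  using symp_edge parent_level by (rule component_of_reachable)

lemma parent_cluster_adjacent:
  "cluster V E v0 parent_cluster \<and> parent_cluster \<subseteq> level (k - 1) \<and> cluster_adj E parent_cluster C"
proof -
  have "E p c" using \<open>parent p c\<close> by (simp add: parent_iff)
  moreover have "p \<notin> C" using parent_level depth_component \<open>0 < k\<close> by (auto simp: sphere_def)
  ultimately show ?thesis
    using parent_cluster_component parent_level \<open>c \<in> C\<close>
    unfolding cluster_def cluster_adj_def component_of_def by (blast intro: reachable_refl)
qed

lemma adjacent_cluster_below_eq:
  assumes "cluster V E v0 A" "A \<subseteq> level (k - 1)" "cluster_adj E A C"
  shows "A = parent_cluster"
proof -
  obtain a c' where "a \<in> A" "c' \<in> C" "E a c'" using assms(3) unfolding cluster_adj_def by blast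
  then have "parent a c'"
    using assms(2) depth_component \<open>0 < k\<close> by (auto simp: parent_iff sphere_def)
  with component_reachable_exterior[OF component \<open>c \<in> C\<close> \<open>c' \<in> C\<close>] \<open>0 < k\<close>
    depth_component[OF \<open>c \<in> C\<close>] depth_component[OF \<open>c' \<in> C\<close>] \<open>parent p c\<close>
  have "reachable E (level (k - 1)) p a" by (blast intro: parents_reachable_below)
  have "A = {y. reachable E (level (k - 1)) a y}"
    using cluster_component_of_sphere[OF assms(1,2)] \<open>a \<in> A\<close> by (rule component_of_eq_reachable)
  also have "\<dots> = parent_cluster"
    using component_of_eq_reachable[OF parent_cluster_component] \<open>reachable E (level (k - 1)) p a\<close>
    by simp
  finally show ?thesis .
qed

lemma walk_meets_parent_cluster:
  assumes "walk V E xs" "hd xs = v0" "last xs \<in> C"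
  shows "set xs \<inter> parent_cluster \<noteq> {}"
proof -
  have "depth (hd xs) < k" "k \<le> depth (last xs)"
    using assms(2,3) depth_root depth_component \<open>0 < k\<close> by auto
  then obtain a b where "a \<in> set xs" "parent a b" "depth b = k"
    and "reachable E (exterior k) b (last xs)"
    using walk_enters_exterior[OF assms(1)] by blast
  moreover have "reachable E (exterior k) (last xs) c"
    using component assms(3) \<open>c \<in> C\<close> by (rule component_reachable_exterior)
  ultimately have "reachable E (exterior k) b c" by (blast intro: reachable_trans[of E _ b "last xs"])
  then have "reachable E (exterior k) c b" by (rule reachable_sym[OF symp_edge])
  then have "reachable E (level (k - 1)) p a"
    using \<open>0 < k\<close> depth_component[OF \<open>c \<in> C\<close>] \<open>depth b = k\<close> \<open>parent p c\<close> \<open>parent a b\<close>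
    by (rule parents_reachable_below)
  with \<open>a \<in> set xs\<close> show ?thesis by blast
qed

end

end

theorem mainTheorem5:
  fixes V :: "'a set" and E :: "'a \<Rightarrow> 'a \<Rightarrow> bool" and v0 :: 'a and C :: "'a set" and k :: nat
  assumes "finite V" and "simple_graph V E" and "connected_graph V E" and "weetman V E"
    and "v0 \<in> V"
    and "cluster V E v0 C" and "C \<subseteq> sphere V E v0 k" and "k \<ge> 1"
  shows "(\<exists>!A. cluster V E v0 A \<and> A \<subseteq> sphere V E v0 (k - 1) \<and> cluster_adj E A C) \<and>
         (\<forall>A. cluster V E v0 A \<and> A \<subseteq> sphere V E v0 (k - 1) \<and> cluster_adj E A C \<longrightarrow>
            (\<forall>xs. gpath V E xs \<and> hd xs = v0 \<and> last xs \<in> C \<longrightarrow> set xs \<inter> A \<noteq> {}))"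
proof -
  interpret weetman_rooted V E v0
    using assms(2-5) unfolding weetman_def by unfold_locales auto
  have C: "component_of E (level k) C" using assms(6,7) by (rule cluster_component_of_sphere)
  then obtain c where c: "c \<in> C" unfolding component_of_def by blast
  have k: "0 < k" using assms(8) by simp
  obtain p where p: "parent p c"
    using parent_exists c C k unfolding component_of_def sphere_def by blast
  let ?A0 = "{y. reachable E (level (k - 1)) p y}"
  have "cluster V E v0 ?A0 \<and> ?A0 \<subseteq> level (k - 1) \<and> cluster_adj E ?A0 C"
    by (rule parent_cluster_adjacent[OF C k c p])
  moreover have "A = ?A0" if "cluster V E v0 A \<and> A \<subseteq> level (k - 1) \<and> cluster_adj E A C" for A
    using adjacent_cluster_below_eq[OF C k c p] that by blast
  moreover have "set xs \<inter> ?A0 \<noteq> {}" if "gpath V E xs \<and> hd xs = v0 \<and> last xs \<in> C" for xs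
    using walk_meets_parent_cluster[OF C k c p] that unfolding gpath_def by blast
  ultimately show ?thesis by metis
qed

end
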